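(* Let $\Bbbk$ be a field, $S=\Bbbk[x_1,x_2,x_3]$, let $d\geq 5$ with $d\neq 6$, and let $I=(x_1^d,x_2^d,x_3^d,x_1^{\lfloor d/2\rfloor}x_2^{\lceil d/2\rceil})$. Then $$\mathrm{HF}\left(S/I, \left\lfloor\tfrac{3d-3}{2}\right\rfloor -1 \right)>\mathrm{HF}\left(S/I,\left\lfloor\tfrac{3d-3}{2}\right\rfloor \right).$$
   Context: $\mathrm{HF}(A,k)=\dim_\Bbbk A_k$ denotes the Hilbert function of the graded algebra $A$. *)

theory Defs
  imports Complex_Main "HOL-Library.Poly_Mapping" "HOL-Library.Numeral_Type"
begin

text \<open>The polynomial ring S = k[x_1,x_2,x_3]: finitely supported maps from exponent
  vectors (indexed by the 3-element type 3) to coefficients in the field k.\<close>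

type_synonym 'k poly3 = "(3 \<Rightarrow>\<^sub>0 nat) \<Rightarrow>\<^sub>0 'k"

text \<open>Variable x_i (i = 0,1,2 stands for x_1,x_2,x_3).\<close>
definition var3 :: "3 \<Rightarrow> 'k::field poly3" where
  "var3 i = Poly_Mapping.single (Poly_Mapping.single i 1) 1"

definition scale3 :: "'k::field \<Rightarrow> 'k poly3 \<Rightarrow> 'k poly3" where
  "scale3 c p = Poly_Mapping.single 0 c * p"

definition mdeg :: "(3 \<Rightarrow>\<^sub>0 nat) \<Rightarrow> nat" where
  "mdeg m = (\<Sum>i\<in>Poly_Mapping.keys m. Poly_Mapping.lookup m i)"

definition homog :: "nat \<Rightarrow> 'k::field poly3 set" where
  "homog k = {p. \<forall>m\<in>Poly_Mapping.keys p. mdeg m = k}"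

definition ideal_gen :: "'k::field poly3 list \<Rightarrow> 'k poly3 set" where
  "ideal_gen gs = {p. \<exists>c. p = (\<Sum>j<length gs. c j * gs ! j)}"

text \<open>Hilbert function of S/I for a homogeneous ideal I:
  dim_k (S/I)_k = dim_k S_k - dim_k (I \<inter> S_k) (S_k is finite dimensional).\<close>
definition HF :: "'k::field poly3 set \<Rightarrow> nat \<Rightarrow> nat" where
  "HF I k = vector_space.dim (scale3 :: 'k \<Rightarrow> 'k poly3 \<Rightarrow> 'k poly3) (homog k) - vector_space.dim (scale3 :: 'k \<Rightarrow> 'k poly3 \<Rightarrow> 'k poly3) (I \<inter> homog k)"

end

theory Submission
  imports Defs
begin

text \<open>Since I is generated by monomials, a basis of (S/I)_t is given by the monomials
  x1^a x2^b x3^c of degree t outside I, i.e. with a, b, c < d and not both a \<ge> \<lfloor>d/2\<rfloor>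
  and b \<ge> \<lceil>d/2\<rceil>.
  Multiplication by x3 matches the standard monomials of degree t with c < d - 1 with those of
  degree t + 1 with c > 0. Hence HF(t) - HF(t + 1) is the number of standard exponent pairs (a, b)
  with a + b = t + 1 - d (the layer c = d - 1) minus the number with a + b = t + 1 (the layer c = 0).
  For t + 1 = T = \<lfloor>(3d - 3)/2\<rfloor> the first number is T - d + 1, the second is 2 for even d
  and 1 for odd d, and the difference is positive exactly when d \<ge> 5 and d \<noteq> 6.\<close>

lemma UNIV_3: "(UNIV :: 3 set) = {0, 1, 2}"
proof -
  have "card {0, 1, 2 :: 3} = CARD(3)" by simp
  then show ?thesis by (intro card_subset_eq [symmetric]) auto
qed

lemma forall_3: "(\<forall>i::3. P i) \<longleftrightarrow> P 0 \<and> P 1 \<and> P 2"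
proof -
  have "i = 0 \<or> i = 1 \<or> i = 2" for i :: 3
    using UNIV_I[of i] by (simp only: UNIV_3) blast
  then show ?thesis by metis
qed

lemma mdeg_eq: "mdeg m = Poly_Mapping.lookup m 0 + Poly_Mapping.lookup m 1 + Poly_Mapping.lookup m 2"
proof -
  have "mdeg m = (\<Sum>i\<in>UNIV. Poly_Mapping.lookup m i)"
    unfolding mdeg_def by (intro sum.mono_neutral_left) (auto simp: in_keys_iff)
  also have "\<dots> = Poly_Mapping.lookup m 0 + Poly_Mapping.lookup m 1 + Poly_Mapping.lookup m 2"
    unfolding UNIV_3 by simp
  finally show ?thesis .
qed

lemma exists_add_eq_iff_lookup_le:
  fixes e m :: "'a \<Rightarrow>\<^sub>0 nat"
  shows "(\<exists>r. m = e + r) \<longleftrightarrow> Poly_Mapping.lookup e \<le> Poly_Mapping.lookup m"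
proof
  assume "Poly_Mapping.lookup e \<le> Poly_Mapping.lookup m"
  then have "m = e + (m - e)"
    by (intro poly_mapping_eqI) (simp add: lookup_add lookup_minus le_fun_def)
  then show "\<exists>r. m = e + r" ..
qed (auto simp: le_fun_def lookup_add)

lemma sum_single_lookup: "(\<Sum>m\<in>Poly_Mapping.keys p. Poly_Mapping.single m (Poly_Mapping.lookup p m)) = p"
  by (intro poly_mapping_eqI) (simp add: lookup_sum lookup_single when_def in_keys_iff)

lemma lookup_scale3: "Poly_Mapping.lookup (scale3 c p) m = c * Poly_Mapping.lookup p m"
  unfolding scale3_def mult_map_scale_conv_mult[symmetric]
  by (simp add: map.rep_eq when_def)

lemma scale3_single: "scale3 c (Poly_Mapping.single m 1) = Poly_Mapping.single m c"
  by (simp add: scale3_def mult_single)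

lemma vector_space_scale3: "vector_space (scale3 :: 'k::field \<Rightarrow> 'k poly3 \<Rightarrow> 'k poly3)"
  by unfold_locales
    (simp_all add: poly_mapping_eq_iff fun_eq_iff lookup_scale3 lookup_add algebra_simps)

lemma dim_keys_subset:
  assumes "finite A"
  shows "vector_space.dim (scale3 :: 'k::field \<Rightarrow> 'k poly3 \<Rightarrow> 'k poly3)
      {p. Poly_Mapping.keys p \<subseteq> A} = card A"
proof -
  interpret v: vector_space "scale3 :: 'k \<Rightarrow> 'k poly3 \<Rightarrow> 'k poly3"
    by (rule vector_space_scale3)
  let ?e = "\<lambda>m. Poly_Mapping.single m (1::'k)"
  have inj: "inj_on ?e A"
    by (intro inj_onI) (metis keys_single one_neq_zero singleton_inject)
  show ?thesis
  proof (rule v.dim_unique[of "?e ` A"])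
    show "{p. Poly_Mapping.keys p \<subseteq> A} \<subseteq> v.span (?e ` A)"
    proof
      fix p :: "'k poly3"
      assume "p \<in> {p. Poly_Mapping.keys p \<subseteq> A}"
      then have "(\<Sum>m\<in>Poly_Mapping.keys p. scale3 (Poly_Mapping.lookup p m) (?e m)) \<in> v.span (?e ` A)"
        by (intro v.span_sum v.span_scale v.span_base) auto
      then show "p \<in> v.span (?e ` A)"
        by (simp add: scale3_single sum_single_lookup)
    qed
    show "v.independent (?e ` A)"
    proof (rule v.independent_if_scalars_zero)
      fix f x
      assume sum0: "(\<Sum>x\<in>?e ` A. scale3 (f x) x) = 0" and "x \<in> ?e ` A"
      then obtain m where m: "m \<in> A" "x = ?e m" by auto
      have "0 = Poly_Mapping.lookup (\<Sum>m'\<in>A. Poly_Mapping.single m' (f (?e m'))) m"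
        using sum0 by (simp add: sum.reindex[OF inj] scale3_single)
      also have "\<dots> = f x"
        using m assms by (simp add: lookup_sum lookup_single when_def)
      finally show "f x = 0" ..
    qed (use assms in auto)
    show "card (?e ` A) = card A" by (rule card_image[OF inj])
  qed auto
qed

lemma sum_in_ideal_gen: "(\<Sum>i<length gs. c i * gs ! i) \<in> ideal_gen gs"
  by (auto simp: ideal_gen_def)

lemma mult_in_ideal_gen:
  assumes "g \<in> set gs"
  shows "q * g \<in> ideal_gen gs"
proof -
  obtain j where "j < length gs" "g = gs ! j"
    using assms by (auto simp: in_set_conv_nth)
  then have "q * g = (\<Sum>i<length gs. (if i = j then q else 0) * gs ! i)"
    by (simp add: if_distrib[of "\<lambda>c. c * _"] cong: if_cong)
  then show ?thesis by (simp only: sum_in_ideal_gen)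
qed

lemma ideal_gen_sum_closed:
  "(\<And>x. x \<in> A \<Longrightarrow> f x \<in> ideal_gen gs) \<Longrightarrow> sum f A \<in> ideal_gen gs"
proof (induction A rule: infinite_finite_induct)
  case (insert x A)
  then obtain c c' where
    "f x = (\<Sum>i<length gs. c i * gs ! i)" "sum f A = (\<Sum>i<length gs. c' i * gs ! i)"
    unfolding ideal_gen_def by blast
  then have "sum f (insert x A) = (\<Sum>i<length gs. (c i + c' i) * gs ! i)"
    using insert by (simp add: sum.distrib distrib_right)
  then show ?case by (simp only: sum_in_ideal_gen)
qed (use sum_in_ideal_gen[of "\<lambda>_. 0" gs] in simp_all)

lemma keys_ideal_gen_monomials:
  assumes "p \<in> ideal_gen (map (\<lambda>e. Poly_Mapping.single e (1::'k::field)) es)"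
    and "m \<in> Poly_Mapping.keys p"
  shows "\<exists>e\<in>set es. Poly_Mapping.lookup e \<le> Poly_Mapping.lookup m"
proof -
  obtain c where "p = (\<Sum>j<length es. c j * Poly_Mapping.single (es ! j) (1::'k))"
    using assms(1) by (auto simp: ideal_gen_def)
  with assms(2)
  have "m \<in> Poly_Mapping.keys (\<Sum>j<length es. c j * Poly_Mapping.single (es ! j) (1::'k))"
    by simp
  then have "m \<in> (\<Union>j<length es. Poly_Mapping.keys (c j * Poly_Mapping.single (es ! j) (1::'k)))"
    by (rule subsetD[OF keys_sum])
  then obtain j where j: "j < length es"
    and "m \<in> Poly_Mapping.keys (c j * Poly_Mapping.single (es ! j) (1::'k))"
    by blast
  from this(2) have "m \<in> {a + b |a b. a \<in> Poly_Mapping.keys (c j) \<and>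
      b \<in> Poly_Mapping.keys (Poly_Mapping.single (es ! j) (1::'k))}"
    by (rule subsetD[OF keys_mult])
  then have "\<exists>r. m = es ! j + r"
    by (auto simp: add.commute)
  with j show ?thesis
    by (auto simp: exists_add_eq_iff_lookup_le)
qed

lemma ideal_gen_monomials_Int_homog:
  "ideal_gen (map (\<lambda>e. Poly_Mapping.single e (1::'k::field)) es) \<inter> homog t =
    {p. Poly_Mapping.keys p \<subseteq>
      {m. mdeg m = t \<and> (\<exists>e\<in>set es. Poly_Mapping.lookup e \<le> Poly_Mapping.lookup m)}}"
  (is "?I \<inter> _ = ?R")
proof
  show "?I \<inter> homog t \<subseteq> ?R"
    using keys_ideal_gen_monomials by (fastforce simp: homog_def)
  show "?R \<subseteq> ?I \<inter> homog t"
  proof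
    fix p :: "'k poly3"
    assume p: "p \<in> ?R"
    have "Poly_Mapping.single m (Poly_Mapping.lookup p m) \<in> ?I"
      if m: "m \<in> Poly_Mapping.keys p" for m
    proof -
      obtain e r where "e \<in> set es" and "m = e + r"
        using p m by (auto simp flip: exists_add_eq_iff_lookup_le)
      then have "Poly_Mapping.single m (Poly_Mapping.lookup p m)
          = Poly_Mapping.single r (Poly_Mapping.lookup p m) * Poly_Mapping.single e 1"
        by (metis add.commute mult.right_neutral mult_single)
      with \<open>e \<in> set es\<close> show ?thesis
        by (simp add: mult_in_ideal_gen)
    qed
    then have "p \<in> ?I"
      by (subst sum_single_lookup[symmetric]) (rule ideal_gen_sum_closed)
    with p show "p \<in> ?I \<inter> homog t" by (auto simp: homog_def)
  qed
qed

definition exponents3 :: "(3 \<Rightarrow>\<^sub>0 nat) \<Rightarrow> nat \<times> nat \<times> nat" where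
  "exponents3 m = (Poly_Mapping.lookup m 0, Poly_Mapping.lookup m 1, Poly_Mapping.lookup m 2)"

definition monomial3 :: "nat \<times> nat \<times> nat \<Rightarrow> (3 \<Rightarrow>\<^sub>0 nat)" where
  "monomial3 = (\<lambda>(a, b, c). Poly_Mapping.single 0 a + Poly_Mapping.single 1 b + Poly_Mapping.single 2 c)"

lemma lookup_monomial3:
  "Poly_Mapping.lookup (monomial3 (a, b, c)) 0 = a"
  "Poly_Mapping.lookup (monomial3 (a, b, c)) 1 = b"
  "Poly_Mapping.lookup (monomial3 (a, b, c)) 2 = c"
  by (simp_all add: monomial3_def lookup_add lookup_single)

lemma exponents3_monomial3 [simp]: "exponents3 (monomial3 x) = x"
  by (cases x) (simp add: exponents3_def lookup_monomial3)

lemma monomial3_exponents3 [simp]: "monomial3 (exponents3 m) = m"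
  by (simp add: poly_mapping_eq_iff fun_eq_iff forall_3 exponents3_def lookup_monomial3)

lemma inj_exponents3: "inj exponents3"
  by (rule inj_on_inverseI[where g = monomial3]) simp

lemma lookup_monomial3_le_iff:
  "Poly_Mapping.lookup (monomial3 (a, b, c)) \<le> Poly_Mapping.lookup m \<longleftrightarrow>
    a \<le> Poly_Mapping.lookup m 0 \<and> b \<le> Poly_Mapping.lookup m 1 \<and> c \<le> Poly_Mapping.lookup m 2"
  by (simp add: le_fun_def forall_3 lookup_monomial3)

definition std_monomials :: "(3 \<Rightarrow>\<^sub>0 nat) list \<Rightarrow> nat \<Rightarrow> (3 \<Rightarrow>\<^sub>0 nat) set" where
  "std_monomials es t =
    {m. mdeg m = t \<and> (\<forall>e\<in>set es. \<not> Poly_Mapping.lookup e \<le> Poly_Mapping.lookup m)}"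

lemma finite_mdeg_eq: "finite {m. mdeg m = t}"
proof (rule inj_on_finite[OF inj_on_subset[OF inj_exponents3]])
  show "exponents3 ` {m. mdeg m = t} \<subseteq> {..t} \<times> {..t} \<times> {..t}"
    by (auto simp: exponents3_def mdeg_eq)
qed auto

lemma HF_monomial_ideal:
  "HF (ideal_gen (map (\<lambda>e. Poly_Mapping.single e (1::'k::field)) es)) t = card (std_monomials es t)"
proof -
  define D where "D = {m. mdeg m = t}"
  define M where
    "M = {m. mdeg m = t \<and> (\<exists>e\<in>set es. Poly_Mapping.lookup e \<le> Poly_Mapping.lookup m)}"
  have "finite D" "M \<subseteq> D"
    unfolding D_def M_def using finite_mdeg_eq by auto
  moreover have "homog t = {p :: 'k poly3. Poly_Mapping.keys p \<subseteq> D}"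
    unfolding homog_def D_def by auto
  moreover have "std_monomials es t = D - M"
    unfolding std_monomials_def D_def M_def by auto
  ultimately show ?thesis
    unfolding HF_def ideal_gen_monomials_Int_homog M_def[symmetric]
    by (simp add: dim_keys_subset card_Diff_subset finite_subset)
qed

definition std_exponents :: "nat \<Rightarrow> nat \<Rightarrow> (nat \<times> nat \<times> nat) set" where
  "std_exponents d t = {(a, b, c). a + b + c = t \<and> a < d \<and> b < d \<and> c < d \<and>
    \<not> (d div 2 \<le> a \<and> d - d div 2 \<le> b)}"

definition std_pairs :: "nat \<Rightarrow> nat \<Rightarrow> (nat \<times> nat) set" where
  "std_pairs d s = {(a, b). a + b = s \<and> a < d \<and> b < d \<and>
    \<not> (d div 2 \<le> a \<and> d - d div 2 \<le> b)}"

lemma std_monomials_eq_image_std_exponents: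
  "std_monomials [monomial3 (d, 0, 0), monomial3 (0, d, 0), monomial3 (0, 0, d),
      monomial3 (d div 2, d - d div 2, 0)] t
    = monomial3 ` std_exponents d t"
  (is "?M = _")
proof -
  have mem: "monomial3 x \<in> ?M \<longleftrightarrow> x \<in> std_exponents d t" for x
    by (cases x)
      (auto simp: std_monomials_def std_exponents_def lookup_monomial3_le_iff mdeg_eq lookup_monomial3)
  show ?thesis
  proof (rule set_eqI)
    fix m
    have "m \<in> ?M \<longleftrightarrow> exponents3 m \<in> std_exponents d t"
      using mem[of "exponents3 m"] by simp
    also have "\<dots> \<longleftrightarrow> m \<in> monomial3 ` std_exponents d t"
      by (auto simp: image_iff intro: bexI[where x = "exponents3 m"])
    finally show "m \<in> ?M \<longleftrightarrow> m \<in> monomial3 ` std_exponents d t" .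
  qed
qed

lemma card_std_monomials:
  "card (std_monomials [monomial3 (d, 0, 0), monomial3 (0, d, 0), monomial3 (0, 0, d),
      monomial3 (d div 2, d - d div 2, 0)] t)
    = card (std_exponents d t)"
proof -
  have "inj monomial3"
    by (rule inj_on_inverseI[where g = exponents3]) simp
  then show ?thesis
    by (simp add: std_monomials_eq_image_std_exponents card_image inj_on_subset)
qed

lemma mem_image_append_third:
  "(a, b, c) \<in> (\<lambda>(a, b). (a, b, h)) ` P \<longleftrightarrow> c = h \<and> (a, b) \<in> P"
  by force

lemma mem_image_Suc_third:
  "(a, b, c) \<in> (\<lambda>(a, b, c). (a, b, Suc c)) ` Q \<longleftrightarrow>
    (\<exists>c'. c = Suc c' \<and> (a, b, c') \<in> Q)"
  by force

lemma std_exponents_Suc_split_bottom: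
  "std_exponents d (Suc t) =
    (\<lambda>(a, b). (a, b, 0)) ` std_pairs d (Suc t) \<union>
    (\<lambda>(a, b, c). (a, b, Suc c)) ` {(a, b, c) \<in> std_exponents d t. Suc c < d}"
  (is "_ = ?R")
proof (rule set_eqI)
  fix x :: "nat \<times> nat \<times> nat"
  obtain a b c where x: "x = (a, b, c)" by (cases x)
  show "x \<in> std_exponents d (Suc t) \<longleftrightarrow> x \<in> ?R"
    unfolding x by (cases c)
      (auto simp: mem_image_append_third mem_image_Suc_third std_exponents_def std_pairs_def)
qed

lemma std_exponents_split_top:
  assumes "d \<le> Suc t"
  shows "std_exponents d t =
    {(a, b, c) \<in> std_exponents d t. Suc c < d} \<union> (\<lambda>(a, b). (a, b, d - 1)) ` std_pairs d (Suc t - d)"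
  (is "_ = ?R")
proof (rule set_eqI)
  fix x :: "nat \<times> nat \<times> nat"
  obtain a b c where x: "x = (a, b, c)" by (cases x)
  show "x \<in> std_exponents d t \<longleftrightarrow> x \<in> ?R"
    unfolding x using assms by (cases "Suc c < d")
      (auto simp: mem_image_append_third mem_image_Suc_third std_exponents_def std_pairs_def)
qed

lemma finite_std_exponents: "finite (std_exponents d t)"
  by (rule finite_subset[of _ "{..<d} \<times> {..<d} \<times> {..<d}"]) (auto simp: std_exponents_def)

lemma finite_std_pairs: "finite (std_pairs d s)"
  by (rule finite_subset[of _ "{..<d} \<times> {..<d}"]) (auto simp: std_pairs_def)

lemma card_std_exponents_Suc:
  assumes "d \<le> Suc t"
  shows "card (std_exponents d (Suc t)) + card (std_pairs d (Suc t - d))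
    = card (std_exponents d t) + card (std_pairs d (Suc t))"
proof -
  define low where "low = {(a, b, c) \<in> std_exponents d t. Suc c < d}"
  have finite_low: "finite low"
    unfolding low_def using finite_std_exponents by (rule finite_subset[rotated]) auto
  have card_image_append_third: "card ((\<lambda>(a, b). (a, b, h)) ` P) = card P"
    for h :: nat and P :: "(nat \<times> nat) set"
    by (rule card_image) (auto intro: inj_onI)
  have "card (std_exponents d (Suc t)) = card (std_pairs d (Suc t)) + card low"
  proof -
    have "card ((\<lambda>(a, b, c). (a, b, Suc c)) ` low) = card low"
      by (rule card_image) (auto intro: inj_onI)
    then show ?thesis
      unfolding std_exponents_Suc_split_bottom low_def[symmetric]
      by (subst card_Un_disjoint) (auto simp: finite_std_pairs finite_low card_image_append_third)
  qed
  moreover have "card (std_exponents d t) = card low + card (std_pairs d (Suc t - d))"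
    unfolding low_def
    by (subst std_exponents_split_top[OF assms], subst card_Un_disjoint)
      (auto simp: finite_std_pairs finite_low[unfolded low_def] card_image_append_third)
  ultimately show ?thesis by simp
qed

lemma card_std_pairs_below_half:
  assumes "s < d div 2"
  shows "card (std_pairs d s) = Suc s"
proof -
  have "std_pairs d s = (\<lambda>i. (i, s - i)) ` {..s}"
    using assms by (auto simp: std_pairs_def image_iff)
  then show ?thesis
    by (simp add: card_image inj_on_def)
qed

lemma std_pairs_top_even:
  assumes "0 < k"
  shows "std_pairs (2 * k) (3 * k - 2) = {(k - 1, 2 * k - 1), (2 * k - 1, k - 1)}"
  using assms by (auto simp: std_pairs_def)

lemma std_pairs_top_odd: "std_pairs (2 * k + 1) (3 * k) = {(2 * k, k)}"
  by (auto simp: std_pairs_def)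

lemma card_std_pairs_top_less:
  assumes "d \<ge> 5" and "d \<noteq> 6"
  shows "card (std_pairs d ((3 * d - 3) div 2)) < card (std_pairs d ((3 * d - 3) div 2 - d))"
proof (cases "even d")
  case True
  then obtain k where d: "d = 2 * k" ..
  with assms have "k \<ge> 4" by auto
  moreover have "(3 * d - 3) div 2 = 3 * k - 2" "(3 * d - 3) div 2 - d = k - 2"
    using d \<open>k \<ge> 4\<close> by auto
  ultimately show ?thesis
    using d std_pairs_top_even[of k] card_std_pairs_below_half[of "k - 2" d] by simp
next
  case False
  then obtain k where d: "d = 2 * k + 1" using oddE by blast
  with assms have "k \<ge> 2" by auto
  moreover have "(3 * d - 3) div 2 = 3 * k" "(3 * d - 3) div 2 - d = k - 1"
    using d by auto
  ultimately show ?thesis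
    using d std_pairs_top_odd[of k] card_std_pairs_below_half[of "k - 1" d] by simp
qed

lemma var3_power: "var3 i ^ n = (Poly_Mapping.single (Poly_Mapping.single i n) 1 :: 'k::field poly3)"
  by (induction n) (simp_all add: var3_def mult_single flip: single_add)

theorem lemma5p7:
  fixes d :: nat
  assumes "d \<ge> 5" and "d \<noteq> 6"
  defines "I \<equiv> ideal_gen [var3 0 ^ d, var3 1 ^ d, var3 2 ^ d,
                 var3 0 ^ (d div 2) * var3 1 ^ (d - d div 2) :: 'k::field poly3]"
  shows "HF I ((3 * d - 3) div 2 - 1) > HF I ((3 * d - 3) div 2)"
proof -
  define T where "T = (3 * d - 3) div 2"
  have "I = ideal_gen (map (\<lambda>e. Poly_Mapping.single e 1) [monomial3 (d, 0, 0), monomial3 (0, d, 0),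
      monomial3 (0, 0, d), monomial3 (d div 2, d - d div 2, 0)])"
    unfolding I_def by (simp add: var3_power monomial3_def mult_single)
  then have HF_I: "HF I t = card (std_exponents d t)" for t
    by (simp only: HF_monomial_ideal card_std_monomials)
  have "d \<le> T" and "T = Suc (T - 1)"
    using assms(1) unfolding T_def by auto
  then have "card (std_exponents d T) + card (std_pairs d (T - d))
      = card (std_exponents d (T - 1)) + card (std_pairs d T)"
    using card_std_exponents_Suc[of d "T - 1"] by simp
  moreover have "card (std_pairs d T) < card (std_pairs d (T - d))"
    unfolding T_def using assms(1,2) by (rule card_std_pairs_top_less)
  ultimately show ?thesis
    unfolding HF_I T_def[symmetric] by linarith
qed

end
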